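(* Let $k\ge1$, let $p_1,\dots,p_k$ be a pmf (the conditional pmf $P_{X_k}(x_i)=P_X(x_i)/q_k$ described in the context), and let $a=\frac{1}{\lambda q_k}>0$. For a vector of real codeword lengths $\ell=(\ell(x_1),\dots,\ell(x_k))$ write $\mathbb{E}[L]=\sum_{i=1}^k p_i\ell(x_i)$ and $\mathbb{E}[L^2]=\sum_{i=1}^k p_i\ell(x_i)^2$. Consider the problem $$\min_{\ell}\ \frac{\mathbb{E}[L^2]+2a\mathbb{E}[L]+2a^2}{2(\mathbb{E}[L]+a)}+\mathbb{E}[L]\quad\text{s.t.}\quad \sum_{i=1}^k 2^{-\ell(x_i)}\le 1,\ \ \ell(x_i)\in\mathbb{R}^+,\ i=1,\dots,k.$$ Then the age-optimal real codeword lengths (optimal solutions of this problem) satisfy $\sum_{i=1}^k 2^{-\ell(x_i)}=1$.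
   Context: Setting: update packets arrive at a transmitter as a Poisson process of rate $\lambda>0$, each carrying an i.i.d. realization of $X$ with pmf $P_X$ on $\{x_1,\dots,x_n\}$ ordered with non-increasing probabilities; only the $k$ most probable realizations are encoded, $q_k=\sum_{\ell=1}^kP_X(x_\ell)$, and $P_{X_k}(x_i)=P_X(x_i)/q_k$ for $i\le k$. The objective above is the long term average age at the receiver under this highest $k$ selective encoding scheme with blocking and service time equal to codeword length; the integrality constraint on lengths has been relaxed to positive reals. *)

theory Defs
  imports Complex_Main
begin

definition EL :: "nat \<Rightarrow> (nat \<Rightarrow> real) \<Rightarrow> (nat \<Rightarrow> real) \<Rightarrow> real" where
  "EL k p l = (\<Sum>i=1..k. p i * l i)"

definition EL2 :: "nat \<Rightarrow> (nat \<Rightarrow> real) \<Rightarrow> (nat \<Rightarrow> real) \<Rightarrow> real" where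
  "EL2 k p l = (\<Sum>i=1..k. p i * (l i)^2)"

definition age_obj :: "nat \<Rightarrow> (nat \<Rightarrow> real) \<Rightarrow> real \<Rightarrow> (nat \<Rightarrow> real) \<Rightarrow> real" where
  "age_obj k p a l =
     (EL2 k p l + 2 * a * EL k p l + 2 * a^2) / (2 * (EL k p l + a)) + EL k p l"

definition kraft_sum :: "nat \<Rightarrow> (nat \<Rightarrow> real) \<Rightarrow> real" where
  "kraft_sum k l = (\<Sum>i=1..k. 2 powr (- l i))"

definition feasible :: "nat \<Rightarrow> (nat \<Rightarrow> real) \<Rightarrow> bool" where
  "feasible k l \<longleftrightarrow> kraft_sum k l \<le> 1 \<and> (\<forall>i\<in>{1..k}. l i > 0)"

definition age_optimal :: "nat \<Rightarrow> (nat \<Rightarrow> real) \<Rightarrow> real \<Rightarrow> (nat \<Rightarrow> real) \<Rightarrow> bool" where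
  "age_optimal k p a l \<longleftrightarrow> feasible k l \<and>
     (\<forall>l'. feasible k l' \<longrightarrow> age_obj k p a l \<le> age_obj k p a l')"

end

theory Submission
  imports Defs
begin

text \<open>Were the Kraft inequality strict at an optimum \<open>\<ell>\<close>, shrinking all lengths to \<open>c \<ell>\<close>
  with \<open>c < 1\<close> close to 1 would keep them feasible, since the Kraft sum depends continuously
  on \<open>c\<close>. Writing the objective as \<open>E[L\<^sup>2] / (2 (E[L] + a)) + a + E[L]\<close>, shrinking scales
  \<open>E[L]\<close> by \<open>c\<close> and \<open>E[L\<^sup>2]\<close> by \<open>c\<^sup>2\<close>, and \<open>c\<^sup>2 (E[L] + a) \<le> c E[L] + a\<close>, so the
  objective strictly decreases. Neither the normalisation of \<open>p\<close> nor the form of \<open>a\<close>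
  matters beyond \<open>a > 0\<close>.\<close>

lemma age_obj_eq:
  assumes "EL k p l + a \<noteq> 0"
  shows "age_obj k p a l = EL2 k p l / (2 * (EL k p l + a)) + a + EL k p l"
  using assms unfolding age_obj_def by (simp add: field_simps power2_eq_square)

lemma EL_scale: "EL k p (\<lambda>i. c * l i) = c * EL k p l"
  unfolding EL_def by (simp add: sum_distrib_left algebra_simps)

lemma EL2_scale: "EL2 k p (\<lambda>i. c * l i) = c\<^sup>2 * EL2 k p l"
  unfolding EL2_def by (simp add: sum_distrib_left algebra_simps power2_eq_square)

lemma EL_pos:
  assumes "k \<ge> 1" "\<forall>i\<in>{1..k}. p i > 0" "\<forall>i\<in>{1..k}. l i > 0"
  shows "EL k p l > 0"
  unfolding EL_def using assms by (intro sum_pos) auto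

lemma EL2_nonneg:
  assumes "\<forall>i\<in>{1..k}. p i \<ge> 0"
  shows "EL2 k p l \<ge> 0"
  unfolding EL2_def using assms by (intro sum_nonneg) auto

lemma kraft_sum_scale_tendsto:
  "((\<lambda>c. kraft_sum k (\<lambda>i. c * l i)) \<longlongrightarrow> kraft_sum k l) (at 1 within S)"
  unfolding kraft_sum_def by (auto intro!: tendsto_eq_intros)

lemma kraft_sum_lt_1_shrink:
  assumes "kraft_sum k l < 1"
  obtains c where "0 < c" "c < 1" "kraft_sum k (\<lambda>i. c * l i) < 1"
proof -
  have "\<forall>\<^sub>F c in at_left 1. kraft_sum k (\<lambda>i. c * l i) < 1"
    using order_tendstoD(2)[OF kraft_sum_scale_tendsto assms] by simp
  moreover have "\<forall>\<^sub>F c::real in at_left 1. 0 < c \<and> c < 1"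
    using eventually_at_left_real[of 0 "1::real"] by simp
  ultimately have "\<forall>\<^sub>F c in at_left 1. 0 < c \<and> c < 1 \<and> kraft_sum k (\<lambda>i. c * l i) < 1"
    by eventually_elim auto
  then show ?thesis
    using that eventually_happens' trivial_limit_at_left_real by blast
qed

lemma shrink_ratio_le:
  fixes a c e s :: real
  assumes "0 < c" "c < 1" "a > 0" "e > 0" "s \<ge> 0"
  shows "c\<^sup>2 * s / (2 * (c * e + a)) \<le> s / (2 * (e + a))"
proof -
  have "c\<^sup>2 \<le> c" "c\<^sup>2 \<le> 1"
    using assms(1,2) by (simp_all add: power2_eq_square mult_le_one)
  then have "c\<^sup>2 * e \<le> c * e" "c\<^sup>2 * a \<le> a"
    using assms(3,4) by (simp_all add: mult_right_mono)
  then have "c\<^sup>2 * (e + a) \<le> c * e + a"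
    by (simp add: distrib_left)
  then have "c\<^sup>2 * s * (e + a) \<le> s * (c * e + a)"
    using assms(5) mult_left_mono by (fastforce simp: algebra_simps)
  moreover have "c * e + a > 0" "e + a > 0" using assms by (simp_all add: add_pos_pos)
  ultimately show ?thesis by (simp add: frac_le_eq divide_le_0_iff field_simps)
qed

lemma age_obj_shrink_less:
  assumes "0 < c" "c < 1" "a > 0" "EL k p l > 0" "EL2 k p l \<ge> 0"
  shows "age_obj k p a (\<lambda>i. c * l i) < age_obj k p a l"
proof -
  have "c * EL k p l + a > 0" "EL k p l + a > 0" using assms by (simp_all add: add_pos_pos)
  then have "age_obj k p a (\<lambda>i. c * l i)
      = c\<^sup>2 * EL2 k p l / (2 * (c * EL k p l + a)) + a + c * EL k p l"
    and "age_obj k p a l = EL2 k p l / (2 * (EL k p l + a)) + a + EL k p l"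
    by (simp_all add: age_obj_eq EL_scale EL2_scale)
  moreover have "c * EL k p l < EL k p l" using assms by simp
  ultimately show ?thesis using shrink_ratio_le[OF assms] by linarith
qed

theorem lemma1:
  fixes k :: nat and p :: "nat \<Rightarrow> real" and lam q :: real and l :: "nat \<Rightarrow> real"
  assumes "k \<ge> 1"
    and "\<forall>i\<in>{1..k}. p i > 0"
    and "(\<Sum>i=1..k. p i) = 1"
    and "lam > 0" and "0 < q" and "q \<le> 1"
    and "age_optimal k p (1 / (lam * q)) l"
  shows "kraft_sum k l = 1"
proof (rule ccontr)
  assume "kraft_sum k l \<noteq> 1"
  define a where "a = 1 / (lam * q)"
  have "a > 0" using assms(4,5) unfolding a_def by simp
  have feas: "feasible k l" and opt: "\<And>l'. feasible k l' \<Longrightarrow> age_obj k p a l \<le> age_obj k p a l'"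
    using assms(7) unfolding age_optimal_def a_def by auto
  have l_pos: "\<forall>i\<in>{1..k}. l i > 0" and "kraft_sum k l < 1"
    using feas \<open>kraft_sum k l \<noteq> 1\<close> unfolding feasible_def by auto
  from \<open>kraft_sum k l < 1\<close> obtain c where c: "0 < c" "c < 1" "kraft_sum k (\<lambda>i. c * l i) < 1"
    by (rule kraft_sum_lt_1_shrink)
  have "feasible k (\<lambda>i. c * l i)" using c l_pos unfolding feasible_def by auto
  moreover have "age_obj k p a (\<lambda>i. c * l i) < age_obj k p a l"
    using assms(1,2) l_pos \<open>a > 0\<close> c
    by (intro age_obj_shrink_less EL_pos EL2_nonneg) auto
  ultimately show False using opt by fastforce
qed

end
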